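(* Let $n\ge1$, and for $j=1,\dots,n$ let $\hat\phi_j\in\mathbb{R}$ and $\tilde\phi_j\ge0$. Let $M\ge3$ be an integer, $\vartheta_m=(2m+1)\pi/M$ for $m\in\mathcal{M}=\{0,1,\dots,M-1\}$, and let $\mathbf{h}_m,\mathbf{g}_m\in\mathbb{R}^n$ have $j$th entries $$[\mathbf{h}_m]_j=\max_{|\epsilon|\le2\tilde\phi_j}\cos(2\hat\phi_j-\vartheta_m+\epsilon),\qquad [\mathbf{g}_m]_j=\frac{[\mathbf{h}_m]_j}{\cos(\pi/M)}.$$ For $\mathbf{y}\in\mathbb{R}^n$ with $\mathbf{y}\succeq\mathbf{0}$ define $$S(\mathbf{y})=\max_{\phi_j\in[\hat\phi_j-\tilde\phi_j,\,\hat\phi_j+\tilde\phi_j],\ j=1,\dots,n}\Big\|\sum_{j=1}^n y_j\,\mathbf{u}(2\phi_j)\Big\|.$$ Then for every $\mathbf{y}\succeq\mathbf{0}$, $$0\le\max_{m\in\mathcal{M}}\mathbf{h}_m^{\mathsf T}\mathbf{y}\le S(\mathbf{y})\le\max_{m\in\mathcal{M}}\mathbf{g}_m^{\mathsf T}\mathbf{y}.$$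
   Context: $\mathbf{u}(\phi)=[\cos\phi\ \ \sin\phi]^{\mathsf T}$; $\|\cdot\|$ is the Euclidean norm; $\mathbf{y}\succeq\mathbf{0}$ means entrywise nonnegative. *)

theory Defs
  imports "HOL-Analysis.Analysis"
begin

definition uvec :: "real \<Rightarrow> real ^ 2" where
  "uvec \<phi> = vector [cos \<phi>, sin \<phi>]"

definition theta :: "nat \<Rightarrow> nat \<Rightarrow> real" where
  "theta M m = (2 * real m + 1) * pi / real M"

text \<open>[h_m]_j = max over |eps| <= 2 phit_j of cos(2 phih_j - theta_m + eps)
  (maximum of a continuous function on a compact interval, written as Sup).\<close>
definition hvec :: "(nat \<Rightarrow> real) \<Rightarrow> (nat \<Rightarrow> real) \<Rightarrow> nat \<Rightarrow> nat \<Rightarrow> nat \<Rightarrow> real" where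
  "hvec phih phit M m j =
     Sup ((\<lambda>\<epsilon>. cos (2 * phih j - theta M m + \<epsilon>)) ` {\<epsilon>. \<bar>\<epsilon>\<bar> \<le> 2 * phit j})"

definition gvec :: "(nat \<Rightarrow> real) \<Rightarrow> (nat \<Rightarrow> real) \<Rightarrow> nat \<Rightarrow> nat \<Rightarrow> nat \<Rightarrow> real" where
  "gvec phih phit M m j = hvec phih phit M m j / cos (pi / real M)"

definition Sfun :: "nat \<Rightarrow> (nat \<Rightarrow> real) \<Rightarrow> (nat \<Rightarrow> real) \<Rightarrow> (nat \<Rightarrow> real) \<Rightarrow> real" where
  "Sfun n phih phit y =
     Sup ((\<lambda>\<phi>. norm (\<Sum>j<n. y j *\<^sub>R uvec (2 * \<phi> j)))
          ` (\<Pi>\<^sub>E j\<in>{..<n}. {phih j - phit j .. phih j + phit j}))"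

end

theory Submission
  imports Defs
begin

text \<open>Write \<open>v(\<phi>) = \<Sum>\<^sub>j y\<^sub>j u(2\<phi>\<^sub>j)\<close>; its component along \<open>u(\<theta>\<^sub>m)\<close> is
  \<open>\<Sum>\<^sub>j y\<^sub>j cos(2\<phi>\<^sub>j - \<theta>\<^sub>m)\<close>, which over the phase box is at most \<open>h\<^sub>m\<^sup>T y\<close>, with equality for
  the maximising phases. Hence \<open>h\<^sub>m\<^sup>T y\<close> is a projection of some \<open>v(\<phi>)\<close>, so at most \<open>S(y)\<close>.
  Conversely the directions \<open>\<theta>\<^sub>m\<close> cut the circle into arcs of length \<open>2\<pi>/M\<close>, so every
  \<open>v\<close> lies within angle \<open>\<pi>/M\<close> of some \<open>u(\<theta>\<^sub>m)\<close>, giving \<open>\<parallel>v\<parallel> cos(\<pi>/M) \<le> h\<^sub>m\<^sup>T y\<close>.\<close>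

lemma uvec_nth [simp]: "uvec t $ 1 = cos t" "uvec t $ 2 = sin t"
  by (simp_all add: uvec_def)

lemma inner_real2: "(x::real^2) \<bullet> z = x$1 * z$1 + x$2 * z$2"
  by (simp add: inner_vec_def UNIV_2)

lemma norm_real2: "norm (x::real^2) = sqrt ((x$1)\<^sup>2 + (x$2)\<^sup>2)"
  by (simp add: norm_vec_def L2_set_def UNIV_2)

lemma norm_uvec [simp]: "norm (uvec t) = 1"
  by (simp add: norm_real2)

lemma inner_uvec_uvec: "uvec s \<bullet> uvec t = cos (s - t)"
  by (simp add: inner_real2 cos_diff)

lemma uvec_polar:
  fixes x :: "real^2"
  obtains t where "0 \<le> t" "t < 2 * pi" "x = norm x *\<^sub>R uvec t"
proof (cases "x = 0")
  case True
  then show ?thesis by (intro that[of 0]) auto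
next
  case False
  define r where "r = norm x"
  have "r > 0" using False unfolding r_def by simp
  have "(x$1 / r)\<^sup>2 + (x$2 / r)\<^sup>2 = ((x$1)\<^sup>2 + (x$2)\<^sup>2) / r\<^sup>2"
    by (simp add: power_divide add_divide_distrib)
  also have "\<dots> = r\<^sup>2 / r\<^sup>2" unfolding r_def norm_real2 by simp
  also have "\<dots> = 1" using \<open>r > 0\<close> by simp
  finally have "(x$1 / r)\<^sup>2 + (x$2 / r)\<^sup>2 = 1" .
  then obtain t where t: "0 \<le> t" "t < 2 * pi" "x$1 / r = cos t" "x$2 / r = sin t"
    by (rule sincos_total_2pi)
  have "x = r *\<^sub>R uvec t"
    using t(3,4) \<open>r > 0\<close> by (simp add: vec_eq_iff forall_2 field_simps)
  then show ?thesis using t(1,2) that unfolding r_def by blast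
qed

lemma theta_near_angle:
  assumes "M > 0" "0 \<le> t" "t < 2 * pi"
  obtains m where "m < M" "\<bar>t - theta M m\<bar> \<le> pi / M"
proof -
  define s where "s = t * M / (2 * pi)"
  have s: "0 \<le> s" "s < M" using assms unfolding s_def by (auto simp: field_simps)
  define m where "m = nat \<lfloor>s\<rfloor>"
  have m: "real m \<le> s" "s < real m + 1" using s unfolding m_def by linarith+
  have "theta M m - t = (2 * real m + 1 - 2 * s) * (pi / M)"
    unfolding theta_def s_def using assms(1) by (simp add: field_simps)
  then have "\<bar>t - theta M m\<bar> = \<bar>2 * real m + 1 - 2 * s\<bar> * (pi / M)"
    by (metis abs_minus_commute abs_mult abs_of_nonneg divide_nonneg_nonneg of_nat_0_le_iff pi_ge_zero)
  also have "\<dots> \<le> pi / M"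
    using m by (intro mult_left_le_one_le) auto
  finally show ?thesis using m s by (intro that[of m]) linarith+
qed

lemma exists_theta_close_direction:
  fixes x :: "real^2"
  assumes "M > 0"
  obtains m where "m < M" "norm x * cos (pi / M) \<le> x \<bullet> uvec (theta M m)"
proof -
  obtain t where t: "0 \<le> t" "t < 2 * pi" "x = norm x *\<^sub>R uvec t"
    by (rule uvec_polar)
  obtain m where m: "m < M" "\<bar>t - theta M m\<bar> \<le> pi / M"
    using theta_near_angle[OF assms t(1,2)] .
  have "pi / M \<le> pi" using assms by (simp add: divide_le_eq)
  then have "cos (pi / M) \<le> cos \<bar>t - theta M m\<bar>"
    using m(2) by (subst cos_mono_le_eq) auto
  then have "norm x * cos (pi / M) \<le> norm x * cos (t - theta M m)"
    by (simp add: mult_left_mono)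
  also have "\<dots> = x \<bullet> uvec (theta M m)"
    by (subst (2) t(3)) (simp add: inner_uvec_uvec)
  finally show ?thesis using m(1) that by blast
qed

lemma cos_pi_div_pos:
  assumes "M > 2"
  shows "cos (pi / M) > 0"
proof (rule cos_gt_zero_pi)
  have "0 < pi / M" using assms by simp
  then show "- (pi / 2) < pi / M" using pi_gt_zero by linarith
  show "pi / M < pi / 2" using assms by (simp add: divide_less_eq)
qed

definition phase_box :: "nat \<Rightarrow> (nat \<Rightarrow> real) \<Rightarrow> (nat \<Rightarrow> real) \<Rightarrow> (nat \<Rightarrow> real) set" where
  "phase_box n phih phit = (\<Pi>\<^sub>E j\<in>{..<n}. {phih j - phit j .. phih j + phit j})"

definition resultant :: "nat \<Rightarrow> (nat \<Rightarrow> real) \<Rightarrow> (nat \<Rightarrow> real) \<Rightarrow> real^2" where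
  "resultant n y \<phi> = (\<Sum>j<n. y j *\<^sub>R uvec (2 * \<phi> j))"

lemma Sfun_eq_Sup_resultant:
  "Sfun n phih phit y = Sup ((\<lambda>\<phi>. norm (resultant n y \<phi>)) ` phase_box n phih phit)"
  unfolding Sfun_def resultant_def phase_box_def ..

lemma inner_resultant_uvec:
  "resultant n y \<phi> \<bullet> uvec t = (\<Sum>j<n. y j * cos (2 * \<phi> j - t))"
  by (simp add: resultant_def inner_sum_left inner_uvec_uvec)

lemma norm_resultant_le_Sfun:
  assumes "\<phi> \<in> phase_box n phih phit"
  shows "norm (resultant n y \<phi>) \<le> Sfun n phih phit y"
proof -
  have "norm (resultant n y \<phi>') \<le> (\<Sum>j<n. \<bar>y j\<bar>)" for \<phi>'
    unfolding resultant_def by (rule order.trans[OF norm_sum]) simp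
  then show ?thesis
    unfolding Sfun_eq_Sup_resultant using assms by (intro cSup_upper bdd_aboveI2) auto
qed

lemma cos_le_hvec:
  assumes "\<phi> \<in> {phih j - phit j .. phih j + phit j}"
  shows "cos (2 * \<phi> - theta M m) \<le> hvec phih phit M m j"
  unfolding hvec_def
proof (rule cSup_upper)
  have "cos (2 * \<phi> - theta M m) = cos (2 * phih j - theta M m + (2 * \<phi> - 2 * phih j))"
    by simp
  moreover have "2 * \<phi> - 2 * phih j \<in> {\<epsilon>. \<bar>\<epsilon>\<bar> \<le> 2 * phit j}"
    using assms by (auto simp: abs_le_iff)
  ultimately show "cos (2 * \<phi> - theta M m)
      \<in> (\<lambda>\<epsilon>. cos (2 * phih j - theta M m + \<epsilon>)) ` {\<epsilon>. \<bar>\<epsilon>\<bar> \<le> 2 * phit j}"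
    by (rule image_eqI)
qed (auto intro!: bdd_aboveI[of _ 1])

lemma hvec_attained:
  assumes "phit j \<ge> 0"
  obtains \<phi> where "\<phi> \<in> {phih j - phit j .. phih j + phit j}"
    and "hvec phih phit M m j = cos (2 * \<phi> - theta M m)"
proof -
  let ?I = "{phih j - phit j .. phih j + phit j}"
  have "\<exists>\<phi>\<in>?I. \<forall>\<psi>\<in>?I. cos (2 * \<psi> - theta M m) \<le> cos (2 * \<phi> - theta M m)"
    by (rule continuous_attains_sup) (use assms in \<open>auto intro!: continuous_intros\<close>)
  then obtain \<phi> where \<phi>: "\<phi> \<in> ?I"
    and max: "\<forall>\<psi>\<in>?I. cos (2 * \<psi> - theta M m) \<le> cos (2 * \<phi> - theta M m)"
    by blast
  have "hvec phih phit M m j \<le> cos (2 * \<phi> - theta M m)"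
    unfolding hvec_def
  proof (rule cSup_least)
    fix c assume "c \<in> (\<lambda>\<epsilon>. cos (2 * phih j - theta M m + \<epsilon>)) ` {\<epsilon>. \<bar>\<epsilon>\<bar> \<le> 2 * phit j}"
    then obtain \<epsilon> where \<epsilon>: "\<bar>\<epsilon>\<bar> \<le> 2 * phit j"
      and c: "c = cos (2 * phih j - theta M m + \<epsilon>)" by blast
    have "phih j + \<epsilon> / 2 \<in> ?I" using \<epsilon> by (auto simp: abs_le_iff)
    with max have "cos (2 * (phih j + \<epsilon> / 2) - theta M m) \<le> cos (2 * \<phi> - theta M m)" by blast
    then show "c \<le> cos (2 * \<phi> - theta M m)" using c by (simp add: algebra_simps)
  qed (use assms in \<open>auto intro: exI[of _ 0]\<close>)
  with cos_le_hvec[where phih = phih and phit = phit and j = j, OF \<phi>]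
  have "hvec phih phit M m j = cos (2 * \<phi> - theta M m)" by (intro antisym)
  with \<phi> show ?thesis by (rule that)
qed

lemma inner_resultant_le_hsum:
  assumes "\<phi> \<in> phase_box n phih phit" "\<forall>j<n. y j \<ge> 0"
  shows "resultant n y \<phi> \<bullet> uvec (theta M m) \<le> (\<Sum>j<n. hvec phih phit M m j * y j)"
  unfolding inner_resultant_uvec
proof (rule sum_mono)
  fix j assume j: "j \<in> {..<n}"
  then have "\<phi> j \<in> {phih j - phit j .. phih j + phit j}"
    using assms(1) unfolding phase_box_def by blast
  then have "cos (2 * \<phi> j - theta M m) \<le> hvec phih phit M m j"
    by (rule cos_le_hvec[where phih = phih and phit = phit and j = j])
  then show "y j * cos (2 * \<phi> j - theta M m) \<le> hvec phih phit M m j * y j"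
    using assms(2) j by (subst mult.commute[of "hvec phih phit M m j"]) (simp add: mult_left_mono)
qed

lemma hsum_eq_inner_resultant:
  assumes "\<forall>j<n. phit j \<ge> 0"
  obtains \<phi> where "\<phi> \<in> phase_box n phih phit"
    and "(\<Sum>j<n. hvec phih phit M m j * y j) = resultant n y \<phi> \<bullet> uvec (theta M m)"
proof -
  let ?P = "\<lambda>j \<psi>. \<psi> \<in> {phih j - phit j .. phih j + phit j}
    \<and> hvec phih phit M m j = cos (2 * \<psi> - theta M m)"
  have "\<forall>j\<in>{..<n}. \<exists>\<psi>. ?P j \<psi>"
  proof
    fix j assume "j \<in> {..<n}"
    with assms show "\<exists>\<psi>. ?P j \<psi>"
      using hvec_attained[of phit j phih M m] by (metis lessThan_iff)
  qed
  then obtain \<psi> where \<psi>: "\<forall>j\<in>{..<n}. ?P j (\<psi> j)"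
    by (rule bchoice[elim_format]) blast
  show ?thesis
  proof
    show "restrict \<psi> {..<n} \<in> phase_box n phih phit"
      using \<psi> unfolding phase_box_def by auto
    show "(\<Sum>j<n. hvec phih phit M m j * y j)
        = resultant n y (restrict \<psi> {..<n}) \<bullet> uvec (theta M m)"
      unfolding inner_resultant_uvec using \<psi> by (intro sum.cong) auto
  qed
qed

lemma norm_resultant_cos_le_hsum:
  assumes "\<phi> \<in> phase_box n phih phit" "\<forall>j<n. y j \<ge> 0" "M > 0"
  obtains m where "m < M"
    "norm (resultant n y \<phi>) * cos (pi / M) \<le> (\<Sum>j<n. hvec phih phit M m j * y j)"
proof -
  obtain m where m: "m < M"
    "norm (resultant n y \<phi>) * cos (pi / M) \<le> resultant n y \<phi> \<bullet> uvec (theta M m)"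
    using exists_theta_close_direction assms(3) by blast
  show ?thesis using that[OF m(1) order.trans[OF m(2) inner_resultant_le_hsum[OF assms(1,2)]]] .
qed

lemma phase_box_centre: "\<forall>j<n. phit j \<ge> 0 \<Longrightarrow> restrict phih {..<n} \<in> phase_box n phih phit"
  unfolding phase_box_def by auto

lemma hsum_le_Sfun:
  assumes "\<forall>j<n. phit j \<ge> 0"
  shows "(\<Sum>j<n. hvec phih phit M m j * y j) \<le> Sfun n phih phit y"
proof -
  obtain \<phi> where \<phi>: "\<phi> \<in> phase_box n phih phit"
    and eq: "(\<Sum>j<n. hvec phih phit M m j * y j) = resultant n y \<phi> \<bullet> uvec (theta M m)"
    using hsum_eq_inner_resultant[OF assms] .
  note eq
  also have "\<dots> \<le> norm (resultant n y \<phi>)"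
    using norm_cauchy_schwarz[of _ "uvec (theta M m)"] by simp
  also have "\<dots> \<le> Sfun n phih phit y" using \<phi> by (rule norm_resultant_le_Sfun)
  finally show ?thesis .
qed

lemma gsum_eq_hsum_div:
  "(\<Sum>j<n. gvec phih phit M m j * y j) = (\<Sum>j<n. hvec phih phit M m j * y j) / cos (pi / M)"
  unfolding gvec_def by (simp add: sum_divide_distrib)

lemma Sfun_le_Max_gsum:
  assumes "\<forall>j<n. phit j \<ge> 0" "\<forall>j<n. y j \<ge> 0" "M > 2"
  shows "Sfun n phih phit y \<le> Max ((\<lambda>m. \<Sum>j<n. gvec phih phit M m j * y j) ` {..<M})"
  unfolding Sfun_eq_Sup_resultant
proof (rule cSup_least)
  show "(\<lambda>\<phi>. norm (resultant n y \<phi>)) ` phase_box n phih phit \<noteq> {}"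
    using phase_box_centre[OF assms(1)] by blast
next
  fix x assume "x \<in> (\<lambda>\<phi>. norm (resultant n y \<phi>)) ` phase_box n phih phit"
  then obtain \<phi> where "\<phi> \<in> phase_box n phih phit" "x = norm (resultant n y \<phi>)" by blast
  moreover have "cos (pi / M) > 0" using assms(3) by (intro cos_pi_div_pos) simp
  moreover have "M > 0" using assms(3) by simp
  then obtain m where "m < M"
    and "norm (resultant n y \<phi>) * cos (pi / M) \<le> (\<Sum>j<n. hvec phih phit M m j * y j)"
    using norm_resultant_cos_le_hsum[OF \<open>\<phi> \<in> _\<close> assms(2)] by blast
  ultimately have "x \<le> (\<Sum>j<n. gvec phih phit M m j * y j)"
    by (simp add: gsum_eq_hsum_div pos_le_divide_eq)
  then show "x \<le> Max ((\<lambda>m. \<Sum>j<n. gvec phih phit M m j * y j) ` {..<M})"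
    using \<open>m < M\<close> by (intro order.trans[OF _ Max_ge]) auto
qed

theorem lemma2:
  fixes n M :: nat and phih phit y :: "nat \<Rightarrow> real"
  assumes "n \<ge> 1"
    and "\<forall>j<n. phit j \<ge> 0"
    and "M \<ge> 3"
    and "\<forall>j<n. y j \<ge> 0"
  shows "0 \<le> Max ((\<lambda>m. \<Sum>j<n. hvec phih phit M m j * y j) ` {..<M})
       \<and> Max ((\<lambda>m. \<Sum>j<n. hvec phih phit M m j * y j) ` {..<M}) \<le> Sfun n phih phit y
       \<and> Sfun n phih phit y \<le> Max ((\<lambda>m. \<Sum>j<n. gvec phih phit M m j * y j) ` {..<M})"
proof -
  define H where "H m = (\<Sum>j<n. hvec phih phit M m j * y j)" for m
  have M: "M > 0" "{..<M} \<noteq> {}" using assms(3) by (auto simp: lessThan_empty_iff)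
  obtain m where "m < M" and bound: "norm (resultant n y (restrict phih {..<n})) * cos (pi / M) \<le> H m"
    using norm_resultant_cos_le_hsum[OF phase_box_centre[OF assms(2)] assms(4) M(1)]
    unfolding H_def .
  have "0 \<le> norm (resultant n y (restrict phih {..<n})) * cos (pi / M)"
    using assms(3) cos_pi_div_pos[of M] by simp
  also note bound
  also have "H m \<le> Max (H ` {..<M})" using \<open>m < M\<close> by (intro Max_ge) auto
  finally have "0 \<le> Max (H ` {..<M})" .
  moreover have "Max (H ` {..<M}) \<le> Sfun n phih phit y"
    using M(2) hsum_le_Sfun[OF assms(2)] unfolding H_def by (simp add: Max_le_iff)
  moreover have "Sfun n phih phit y \<le> Max ((\<lambda>m. \<Sum>j<n. gvec phih phit M m j * y j) ` {..<M})"
    using assms(3) by (intro Sfun_le_Max_gsum assms(2,4)) auto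
  ultimately show ?thesis unfolding H_def by blast
qed

end
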